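(* In the 2-TBSG setting below, let $\widehat{\pi}=(\widehat{\pi}_1,\widehat{\pi}_2)$ be an $\epsilon_{\mathrm{PS}}$-optimal policy in $\widehat{\mathcal{G}}$. Then, componentwise, $$-\Big(\|Q^{\widehat{c}(\pi_2^* ),\pi_2^*}-\widehat{Q}^{\widehat{c}(\pi_2^* ),\pi_2^*}\|_\infty+\|Q^{\widehat{\pi}_1,\widehat{\pi}_2}-\widehat{Q}^{\widehat{\pi}_1,\widehat{\pi}_2}\|_\infty+\epsilon_{\mathrm{PS}}\Big)\mathbf{1}\le Q^*-Q^{\widehat{\pi}_1,\widehat{\pi}_2}$$ $$\le\Big(\|Q^{\pi_1^*,\widehat{c}(\pi_1^* )}-\widehat{Q}^{\pi_1^*,\widehat{c}(\pi_1^* )}\|_\infty+\|Q^{\widehat{\pi}_1,\widehat{\pi}_2}-\widehat{Q}^{\widehat{\pi}_1,\widehat{\pi}_2}\|_\infty+\epsilon_{\mathrm{PS}}\Big)\mathbf{1}.$$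
   Context: A 2-TBSG $\mathcal{G}=(\mathcal{S}_1,\mathcal{S}_2,\mathcal{A},P,r,\gamma)$: finite $\mathcal{S}=\mathcal{S}_1\sqcup\mathcal{S}_2$, finite $\mathcal{A}$, kernel $P$, reward $r\in[0,1]$, $\gamma\in(0,1)$; player 1 (maximizer) uses $\pi_1:\mathcal{S}_1\to\mathcal{A}$, player 2 (minimizer) uses $\pi_2:\mathcal{S}_2\to\mathcal{A}$; for $\pi=(\pi_1,\pi_2)$, $V^\pi(s)=\mathbb{E}[\sum_t\gamma^tr(s^t,\pi(s^t))|s^0=s]$, $Q^\pi(s,a)=r(s,a)+\gamma\sum_{s'}P(s'|s,a)V^\pi(s')$. Counter (best-response) policies: $c(\pi_2)$ is a player-1 policy with $V^{c(\pi_2),\pi_2}=\max_{\pi_1}V^{\pi_1,\pi_2}$ at every state; $c(\pi_1)$ is a player-2 policy with $V^{\pi_1,c(\pi_1)}=\min_{\pi_2}V^{\pi_1,\pi_2}$ at every state. $\pi^*=(\pi_1^*,\pi_2^* )$ is a Nash equilibrium of $\mathcal{G}$ ($\pi_1^*=c(\pi_2^* )$, $\pi_2^*=c(\pi_1^* )$) and $Q^*=Q^{\pi^*}$. $P$ has linear representation $P(s'|s,a)=\sum_k\phi_k(s,a)\psi_k(s')$ satisfying the anchor-state assumption (anchors $(s_k,a_k)$, $\lambda_k^{s,a}\ge0$, $\sum_k\lambda_k^{s,a}=1$, $\phi(s,a)=\sum_k\lambda_k^{s,a}\phi(s_k,a_k)$); the empirical game $\widehat{\mathcal{G}}$ has kernel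 $\widehat{P}(s'|s,a)=\sum_k\lambda_k^{s,a}\widehat{P}_\mathcal{K}(s'|s_k,a_k)$, $\widehat{P}_\mathcal{K}(\cdot|s_k,a_k)$ the empirical distribution of $N$ samples from $P(\cdot|s_k,a_k)$. Hatted quantities ($\widehat{Q}^\pi$, $\widehat{Q}^*$, counter policies $\widehat{c}$) refer to $\widehat{\mathcal{G}}$. $\widehat{\pi}$ is $\epsilon_{\mathrm{PS}}$-optimal in $\widehat{\mathcal{G}}$ if $|\widehat{Q}^{\widehat{\pi}}-\widehat{Q}^*|\le\epsilon_{\mathrm{PS}}$ componentwise. $\mathbf{1}$ is the all-ones vector. *)

theory Defs
  imports "HOL-Analysis.Analysis"
begin

text \<open>A transition kernel is
  P s a s' = probability of moving to s' from s under action a.\<close>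

definition is_kernel :: "('s::finite \<Rightarrow> 'a \<Rightarrow> 's \<Rightarrow> real) \<Rightarrow> bool" where
  "is_kernel P \<longleftrightarrow> (\<forall>s a s'. 0 \<le> P s a s') \<and> (\<forall>s a. (\<Sum>s'\<in>UNIV. P s a s') = 1)"

definition joint :: "'s set \<Rightarrow> ('s \<Rightarrow> 'a) \<Rightarrow> ('s \<Rightarrow> 'a) \<Rightarrow> 's \<Rightarrow> 'a" where
  "joint S1 pi1 pi2 s = (if s \<in> S1 then pi1 s else pi2 s)"

fun mpow :: "('s::finite \<Rightarrow> 'a \<Rightarrow> 's \<Rightarrow> real) \<Rightarrow> ('s \<Rightarrow> 'a) \<Rightarrow> nat \<Rightarrow> 's \<Rightarrow> 's \<Rightarrow> real" where
  "mpow P pol 0 s s' = (if s = s' then 1 else 0)"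
| "mpow P pol (Suc t) s s' = (\<Sum>u\<in>UNIV. mpow P pol t s u * P u (pol u) s')"

definition Vf :: "('s::finite \<Rightarrow> 'a \<Rightarrow> 's \<Rightarrow> real) \<Rightarrow> ('s \<Rightarrow> 'a \<Rightarrow> real) \<Rightarrow> real
    \<Rightarrow> ('s \<Rightarrow> 'a) \<Rightarrow> 's \<Rightarrow> real" where
  "Vf P r \<gamma> pol s = (\<Sum>t. \<gamma> ^ t * (\<Sum>s'\<in>UNIV. mpow P pol t s s' * r s' (pol s')))"

definition Qf :: "('s::finite \<Rightarrow> 'a \<Rightarrow> 's \<Rightarrow> real) \<Rightarrow> ('s \<Rightarrow> 'a \<Rightarrow> real) \<Rightarrow> real
    \<Rightarrow> ('s \<Rightarrow> 'a) \<Rightarrow> 's \<Rightarrow> 'a \<Rightarrow> real" where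
  "Qf P r \<gamma> pol s a = r s a + \<gamma> * (\<Sum>s'\<in>UNIV. P s a s' * Vf P r \<gamma> pol s')"

definition is_counter1 :: "('s::finite \<Rightarrow> 'a \<Rightarrow> 's \<Rightarrow> real) \<Rightarrow> ('s \<Rightarrow> 'a \<Rightarrow> real) \<Rightarrow> real
    \<Rightarrow> 's set \<Rightarrow> ('s \<Rightarrow> 'a) \<Rightarrow> ('s \<Rightarrow> 'a) \<Rightarrow> bool" where
  "is_counter1 P r \<gamma> S1 pi2 c1 \<longleftrightarrow>
     (\<forall>pi1 s. Vf P r \<gamma> (joint S1 pi1 pi2) s \<le> Vf P r \<gamma> (joint S1 c1 pi2) s)"

definition is_counter2 :: "('s::finite \<Rightarrow> 'a \<Rightarrow> 's \<Rightarrow> real) \<Rightarrow> ('s \<Rightarrow> 'a \<Rightarrow> real) \<Rightarrow> real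
    \<Rightarrow> 's set \<Rightarrow> ('s \<Rightarrow> 'a) \<Rightarrow> ('s \<Rightarrow> 'a) \<Rightarrow> bool" where
  "is_counter2 P r \<gamma> S1 pi1 c2 \<longleftrightarrow>
     (\<forall>pi2 s. Vf P r \<gamma> (joint S1 pi1 c2) s \<le> Vf P r \<gamma> (joint S1 pi1 pi2) s)"

definition is_nash :: "('s::finite \<Rightarrow> 'a \<Rightarrow> 's \<Rightarrow> real) \<Rightarrow> ('s \<Rightarrow> 'a \<Rightarrow> real) \<Rightarrow> real
    \<Rightarrow> 's set \<Rightarrow> ('s \<Rightarrow> 'a) \<Rightarrow> ('s \<Rightarrow> 'a) \<Rightarrow> bool" where
  "is_nash P r \<gamma> S1 pi1 pi2 \<longleftrightarrow> is_counter1 P r \<gamma> S1 pi2 pi1 \<and> is_counter2 P r \<gamma> S1 pi1 pi2"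

definition supnorm :: "('s::finite \<Rightarrow> 'a::finite \<Rightarrow> real) \<Rightarrow> real" where
  "supnorm f = Max (range (\<lambda>(s, a). \<bar>f s a\<bar>))"

definition empirical :: "nat \<Rightarrow> (nat \<Rightarrow> 's) \<Rightarrow> 's \<Rightarrow> real" where
  "empirical N smp s' = real (card {i. i < N \<and> smp i = s'}) / real N"

end

theory Submission
  imports Defs
begin

text \<open>Telescope through the empirical game, writing Qh, Vh for its value functions and
  c2 for the empirical counter policy of \<pi>1*. For the upper bound,
  Q* - Q^\<pi> \<le> Q^{\<pi>1*,c2} - Q^\<pi> because \<pi>2* is a best response, and
  Q^{\<pi>1*,c2} - Q^\<pi> = (Q - Qh)^{\<pi>1*,c2} + (Qh^{\<pi>1*,c2} - Qh*) + (Qh* - Qh^\<pi>) + (Qh - Q)^\<pi>,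
  where the second summand is nonpositive since in the empirical game
  Vh^{\<pi>1*,c2} \<le> Vh^{\<pi>1*,\<pi>h2*} \<le> Vh*, and Q is monotone in V whenever the kernel is
  nonnegative and \<gamma> \<ge> 0. The lower bound is symmetric.\<close>

lemma Qf_mono:
  assumes "\<forall>s a s'. 0 \<le> K s a s'" "0 \<le> \<gamma>" "\<forall>s. Vf K r \<gamma> p1 s \<le> Vf K r \<gamma> p2 s"
  shows "Qf K r \<gamma> p1 s a \<le> Qf K r \<gamma> p2 s a"
proof -
  have "(\<Sum>s'\<in>UNIV. K s a s' * Vf K r \<gamma> p1 s') \<le> (\<Sum>s'\<in>UNIV. K s a s' * Vf K r \<gamma> p2 s')"
    by (rule sum_mono) (simp add: assms mult_left_mono)
  then show ?thesis
    unfolding Qf_def using assms(2) by (simp add: mult_left_mono)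
qed

lemma abs_diff_le_supnorm:
  fixes f g :: "'s::finite \<Rightarrow> 'a::finite \<Rightarrow> real"
  shows "\<bar>f s a - g s a\<bar> \<le> supnorm (\<lambda>s a. f s a - g s a)"
  unfolding supnorm_def by (rule Max_ge) auto

lemma empirical_nonneg: "0 \<le> empirical N smp s'"
  unfolding empirical_def by simp

lemma anchored_empirical_nonneg:
  fixes lam :: "'s \<Rightarrow> 'a \<Rightarrow> 'k::finite \<Rightarrow> real"
  assumes "\<forall>s a k. 0 \<le> lam s a k"
  shows "0 \<le> (\<Sum>k\<in>UNIV. lam s a k * empirical N (smp k) s')"
  using assms by (simp add: sum_nonneg empirical_nonneg)

lemma nash_Vf_le_counter1:
  assumes "is_nash K r \<gamma> S1 p1 p2" "is_counter1 K r \<gamma> S1 q2 c"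
  shows "Vf K r \<gamma> (joint S1 p1 p2) s \<le> Vf K r \<gamma> (joint S1 c q2) s"
proof -
  have "Vf K r \<gamma> (joint S1 p1 p2) s \<le> Vf K r \<gamma> (joint S1 p1 q2) s"
    using assms(1) by (simp add: is_nash_def is_counter2_def)
  also have "\<dots> \<le> Vf K r \<gamma> (joint S1 c q2) s"
    using assms(2) by (simp add: is_counter1_def)
  finally show ?thesis .
qed

lemma counter2_Vf_le_nash:
  assumes "is_nash K r \<gamma> S1 p1 p2" "is_counter2 K r \<gamma> S1 q1 c"
  shows "Vf K r \<gamma> (joint S1 q1 c) s \<le> Vf K r \<gamma> (joint S1 p1 p2) s"
proof -
  have "Vf K r \<gamma> (joint S1 q1 c) s \<le> Vf K r \<gamma> (joint S1 q1 p2) s"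
    using assms(2) by (simp add: is_counter2_def)
  also have "\<dots> \<le> Vf K r \<gamma> (joint S1 p1 p2) s"
    using assms(1) by (simp add: is_nash_def is_counter1_def)
  finally show ?thesis .
qed

lemma nash_Qf_ge_deviation1:
  assumes "\<forall>s a s'. 0 \<le> K s a s'" "0 \<le> \<gamma>" "is_nash K r \<gamma> S1 p1 p2"
  shows "Qf K r \<gamma> (joint S1 c p2) s a \<le> Qf K r \<gamma> (joint S1 p1 p2) s a"
  using assms by (auto intro!: Qf_mono simp: is_nash_def is_counter1_def)

lemma nash_Qf_le_deviation2:
  assumes "\<forall>s a s'. 0 \<le> K s a s'" "0 \<le> \<gamma>" "is_nash K r \<gamma> S1 p1 p2"
  shows "Qf K r \<gamma> (joint S1 p1 p2) s a \<le> Qf K r \<gamma> (joint S1 p1 c) s a"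
  using assms by (auto intro!: Qf_mono simp: is_nash_def is_counter2_def)

theorem lemma26:
  fixes P :: "'s::finite \<Rightarrow> 'a::finite \<Rightarrow> 's \<Rightarrow> real"
    and r :: "'s \<Rightarrow> 'a \<Rightarrow> real" and \<gamma> :: real and S1 :: "'s set"
    and \<phi> :: "'s \<Rightarrow> 'a \<Rightarrow> 'k::finite \<Rightarrow> real" and \<psi> :: "'k \<Rightarrow> 's \<Rightarrow> real"
    and sk :: "'k \<Rightarrow> 's" and ak :: "'k \<Rightarrow> 'a" and lam :: "'s \<Rightarrow> 'a \<Rightarrow> 'k \<Rightarrow> real"
    and N :: nat and smp :: "'k \<Rightarrow> nat \<Rightarrow> 's"
    and Ph :: "'s \<Rightarrow> 'a \<Rightarrow> 's \<Rightarrow> real"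
    and pi1s pi2s pih1 pih2 pihs1 pihs2 c1h c2h :: "'s \<Rightarrow> 'a"
    and \<epsilon> :: real
  assumes kernel: "is_kernel P"
    and reward: "\<forall>s a. 0 \<le> r s a \<and> r s a \<le> 1"
    and gamma: "0 < \<gamma>" "\<gamma> < 1"
    and linear: "\<forall>s a s'. P s a s' = (\<Sum>k\<in>UNIV. \<phi> s a k * \<psi> k s')"
    and anchor_nonneg: "\<forall>s a k. 0 \<le> lam s a k"
    and anchor_sum: "\<forall>s a. (\<Sum>k\<in>UNIV. lam s a k) = 1"
    and anchor_comb: "\<forall>s a j. \<phi> s a j = (\<Sum>k\<in>UNIV. lam s a k * \<phi> (sk k) (ak k) j)"
    and N_pos: "0 < N"
    and Ph_def: "\<forall>s a s'. Ph s a s' = (\<Sum>k\<in>UNIV. lam s a k * empirical N (smp k) s')"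
    and nash: "is_nash P r \<gamma> S1 pi1s pi2s"
    and nash_hat: "is_nash Ph r \<gamma> S1 pihs1 pihs2"
    and eps_opt: "\<forall>s a. \<bar>Qf Ph r \<gamma> (joint S1 pih1 pih2) s a - Qf Ph r \<gamma> (joint S1 pihs1 pihs2) s a\<bar> \<le> \<epsilon>"
    and c1h: "is_counter1 Ph r \<gamma> S1 pi2s c1h"
    and c2h: "is_counter2 Ph r \<gamma> S1 pi1s c2h"
  shows "\<forall>s a.
    - (supnorm (\<lambda>s a. Qf P r \<gamma> (joint S1 c1h pi2s) s a - Qf Ph r \<gamma> (joint S1 c1h pi2s) s a)
       + supnorm (\<lambda>s a. Qf P r \<gamma> (joint S1 pih1 pih2) s a - Qf Ph r \<gamma> (joint S1 pih1 pih2) s a)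
       + \<epsilon>)
      \<le> Qf P r \<gamma> (joint S1 pi1s pi2s) s a - Qf P r \<gamma> (joint S1 pih1 pih2) s a
    \<and> Qf P r \<gamma> (joint S1 pi1s pi2s) s a - Qf P r \<gamma> (joint S1 pih1 pih2) s a
      \<le> supnorm (\<lambda>s a. Qf P r \<gamma> (joint S1 pi1s c2h) s a - Qf Ph r \<gamma> (joint S1 pi1s c2h) s a)
       + supnorm (\<lambda>s a. Qf P r \<gamma> (joint S1 pih1 pih2) s a - Qf Ph r \<gamma> (joint S1 pih1 pih2) s a)
       + \<epsilon>"
proof (intro allI conjI)
  fix s a
  let ?Q = "\<lambda>K p1 p2. Qf K r \<gamma> (joint S1 p1 p2) s a"
  let ?err = "\<lambda>p1 p2. supnorm (\<lambda>s a. Qf P r \<gamma> (joint S1 p1 p2) s a - Qf Ph r \<gamma> (joint S1 p1 p2) s a)"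
  have P_nonneg: "\<forall>s a s'. 0 \<le> P s a s'" using kernel by (simp add: is_kernel_def)
  have Ph_nonneg: "\<forall>s a s'. 0 \<le> Ph s a s'"
    using Ph_def anchored_empirical_nonneg[OF anchor_nonneg] by metis
  have "0 \<le> \<gamma>" using gamma by simp
  have hat_le_c1h: "?Q Ph pihs1 pihs2 \<le> ?Q Ph c1h pi2s"
    using Ph_nonneg \<open>0 \<le> \<gamma>\<close> nash_Vf_le_counter1[OF nash_hat c1h] by (blast intro: Qf_mono)
  have c2h_le_hat: "?Q Ph pi1s c2h \<le> ?Q Ph pihs1 pihs2"
    using Ph_nonneg \<open>0 \<le> \<gamma>\<close> counter2_Vf_le_nash[OF nash_hat c2h] by (blast intro: Qf_mono)
  have err_hat: "\<bar>?Q P pih1 pih2 - ?Q Ph pih1 pih2\<bar> \<le> ?err pih1 pih2"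
    and err_c1h: "\<bar>?Q P c1h pi2s - ?Q Ph c1h pi2s\<bar> \<le> ?err c1h pi2s"
    and err_c2h: "\<bar>?Q P pi1s c2h - ?Q Ph pi1s c2h\<bar> \<le> ?err pi1s c2h"
    by (rule abs_diff_le_supnorm)+
  have opt: "\<bar>?Q Ph pih1 pih2 - ?Q Ph pihs1 pihs2\<bar> \<le> \<epsilon>"
    using eps_opt by blast
  show "- (?err c1h pi2s + ?err pih1 pih2 + \<epsilon>) \<le> ?Q P pi1s pi2s - ?Q P pih1 pih2"
    using nash_Qf_ge_deviation1[OF P_nonneg \<open>0 \<le> \<gamma>\<close> nash, of c1h s a]
      hat_le_c1h err_hat err_c1h opt by linarith
  show "?Q P pi1s pi2s - ?Q P pih1 pih2 \<le> ?err pi1s c2h + ?err pih1 pih2 + \<epsilon>"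
    using nash_Qf_le_deviation2[OF P_nonneg \<open>0 \<le> \<gamma>\<close> nash, of s a c2h]
      c2h_le_hat err_hat err_c2h opt by linarith
qed

end
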